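(* Let $A$ and $A+\sum_{i=1}^r\mathbf{x}_i\mathbf{x}_i^{\top}$ both lie in $\mathrm{SGL}_n(\mathbb{F}_2)$, where $\mathbf{x}_1,\ldots,\mathbf{x}_r\in\mathbb{F}_2^n$ are linearly independent and $\mathbf{x}_i^{\top}A^{-1}\mathbf{x}_i=1$ for all $i$. Then $d\big(A,A+\sum_{i=1}^r\mathbf{x}_i\mathbf{x}_i^{\top}\big)\ge r+1$.
   Context: $\mathrm{SGL}_n(\mathbb{F}_2)$ is the set of invertible symmetric $n\times n$ matrices over the binary field; $d$ is the graph distance in the graph $\Gamma_n$ on $\mathrm{SGL}_n(\mathbb{F}_2)$ where $A\sim B$ iff $\mathrm{rank}(A-B)=1$. *)

theory Defs
  imports "HOL-Analysis.Analysis" "HOL-Library.Z2" "HOL-Library.Extended_Nat"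
begin

definition SGL :: "(bit^'n^'n) set" where
  "SGL = {A. transpose A = A \<and> invertible A}"

definition sgl_adj :: "bit^'n^'n \<Rightarrow> bit^'n^'n \<Rightarrow> bool" where
  "sgl_adj A B \<longleftrightarrow> rank (A - B) = 1"

definition sgl_walk :: "nat \<Rightarrow> bit^'n^'n \<Rightarrow> bit^'n^'n \<Rightarrow> bool" where
  "sgl_walk k A B \<longleftrightarrow> (\<exists>p :: nat \<Rightarrow> bit^'n^'n. p 0 = A \<and> p k = B \<and>
      (\<forall>i\<le>k. p i \<in> SGL) \<and> (\<forall>i<k. sgl_adj (p i) (p (Suc i))))"

text \<open>Graph distance (infinity if no walk exists).\<close>
definition sgl_dist :: "bit^'n^'n \<Rightarrow> bit^'n^'n \<Rightarrow> enat" where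
  "sgl_dist A B = (INF k \<in> {k. sgl_walk k A B}. enat k)"

definition outer :: "bit^'n \<Rightarrow> bit^'n^'n" where
  "outer x = (\<chi> i j. x $ i * x $ j)"

end

(* Over F_2 a symmetric rank-one matrix is an outer product v v^T, so a walk of length k
   from A to A + C, where C = sum_j x_j x_j^T, gives C = sum_{i<k} v_i v_i^T with every partial
   sum A + sum_{i<m} v_i v_i^T invertible. Each x_j lies in the range of C (apply C to a vector
   dual to x_j against the other x's), and that range is spanned by the v_i; hence k >= r, and
   if k = r the v_i are independent too, so that C z = v_0 and z^T v_0 = 1 for some z.
   In characteristic 2 the form q(y) = y^T A^-1 y is additive, and q(x_j) = 1 for all j;
   expanding C z in the x_j gives q(v_0) = z^T C z = z^T v_0 = 1. But then
   (A + v_0 v_0^T) A^-1 v_0 = (1 + q(v_0)) v_0 = 0, so the first step of the walk already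
   leaves SGL_n. *)

theory Submission
  imports Defs
begin

(* The Z2 simp rules turn sums of bits into cardinalities; keep F_2 arithmetic in ring form. *)
declare add_bit_eq_xor [simp del] mult_bit_eq_and [simp del]

lemma bit_add_self [simp]: "(a::bit) + a = 0"
  by (cases a) simp_all

lemma bit_mult_self [simp]: "(a::bit) * a = a"
  by (cases a) simp_all

definition dot :: "'a::comm_semiring_1^'n \<Rightarrow> 'a^'n \<Rightarrow> 'a" where
  "dot u w = (\<Sum>j\<in>UNIV. u$j * w$j)"

lemma dot_commute: "dot u w = dot w u"
  unfolding dot_def by (simp add: mult.commute)

lemma dot_add_right: "dot u (w + y) = dot u w + dot u y"
  unfolding dot_def by (simp add: distrib_left sum.distrib)

lemma dot_add_left: "dot (u + w) y = dot u y + dot w y"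
  by (metis dot_add_right dot_commute)

lemma dot_scale_right: "dot u (c *s w) = c * dot u w"
  unfolding dot_def by (simp add: sum_distrib_left mult.left_commute)

lemma dot_scale_left: "dot (c *s u) w = c * dot u w"
  by (metis dot_scale_right dot_commute)

lemma dot_zero_right [simp]: "dot u 0 = 0"
  unfolding dot_def by simp

lemma dot_sum_right: "dot u (\<Sum>i\<in>S. f i) = (\<Sum>i\<in>S. dot u (f i))"
  by (induction S rule: infinite_finite_induct) (simp_all add: dot_add_right)

lemma dot_matrix_vector_symmetric:
  assumes "transpose M = M"
  shows "dot y (M *v w) = dot w (M *v y)"
proof -
  have "dot y (M *v w) = (\<Sum>i\<in>UNIV. \<Sum>j\<in>UNIV. y$i * M$i$j * w$j)"
    unfolding dot_def matrix_vector_mult_def by (simp add: sum_distrib_left mult.assoc)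
  also have "\<dots> = (\<Sum>j\<in>UNIV. \<Sum>i\<in>UNIV. w$j * M$j$i * y$i)"
    using assms by (subst sum.swap) (simp add: transpose_def vec_eq_iff mult_ac)
  also have "\<dots> = dot w (M *v y)"
    unfolding dot_def matrix_vector_mult_def by (simp add: sum_distrib_left mult.assoc)
  finally show ?thesis .
qed

lemma dot_eq_0_on_span:
  fixes z :: "'a::field^'n"
  assumes "w \<in> vec.span S" "\<And>s. s \<in> S \<Longrightarrow> dot z s = 0"
  shows "dot z w = 0"
  using assms(1)
  by (induction rule: vec.span_induct_alt) (simp_all add: assms(2) dot_add_right dot_scale_right)

lemma exists_dot_separating:
  fixes a :: "'a::field^'n"
  assumes "a \<notin> vec.span S"
  obtains z where "dot z a = 1" "\<And>w. w \<in> vec.span S \<Longrightarrow> dot z w = 0"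
proof -
  obtain B where B: "B \<subseteq> S" "vec.independent B" "S \<subseteq> vec.span B"
    by (rule vec.maximal_independent_subset)
  have span_B: "vec.span B = vec.span S"
    using B(1,3) by (metis vec.span_mono vec.span_span order_antisym)
  then have ind: "vec.independent (insert a B)"
    using assms B(2) vec.independent_insertI by blast
  obtain i :: 'n where True by blast
  from vec.linear_independent_extend[OF ind, of "\<lambda>y. if y = a then axis i 1 else 0"]
  obtain g where g: "Vector_Spaces.linear (*s) (*s) g"
    "\<forall>y\<in>insert a B. g y = (if y = a then axis i 1 else 0)"
    by blast
  define z where "z = matrix g $ i"
  have dot_z: "dot z y = g y $ i" for y
  proof -
    have "g y $ i = (matrix g *v y) $ i"
      by (simp only: matrix_works[OF g(1)])
    then show ?thesis
      by (simp add: z_def dot_def matrix_vector_mult_def)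
  qed
  have "dot z b = 0" if "b \<in> B" for b
  proof -
    have "b \<noteq> a"
      using that assms span_B vec.span_base by blast
    then show ?thesis
      using that g(2) dot_z by simp
  qed
  then have "dot z w = 0" if "w \<in> vec.span S" for w
    using that span_B dot_eq_0_on_span by blast
  moreover have "dot z a = 1"
    using g(2) dot_z by simp
  ultimately show ?thesis
    using that by blast
qed

lemma matrix_mul_matrix_inv:
  assumes "invertible A"
  shows "A ** matrix_inv A = mat 1"
  using someI_ex[OF assms[unfolded invertible_def]] by (simp add: matrix_inv_def)

lemma symmetric_matrix_inv:
  fixes A :: "'a::comm_semiring_1^'n^'n"
  assumes "invertible A" "transpose A = A"
  shows "transpose (matrix_inv A) = matrix_inv A"
proof -
  let ?M = "matrix_inv A"
  have "transpose ?M ** A = transpose (A ** ?M)"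
    using assms(2) by (metis matrix_transpose_mul)
  then have left_inv: "transpose ?M ** A = mat 1"
    using matrix_mul_matrix_inv[OF assms(1)] by simp
  have "transpose ?M = transpose ?M ** (A ** ?M)"
    using matrix_mul_matrix_inv[OF assms(1)] by simp
  also have "\<dots> = (transpose ?M ** A) ** ?M"
    by (rule matrix_mul_assoc)
  finally show ?thesis
    using left_inv by simp
qed

lemma outer_mult_vec: "outer v *v z = dot v z *s v"
proof -
  have "(\<Sum>j\<in>UNIV. v$i * v$j * z$j) = (\<Sum>j\<in>UNIV. v$j * z$j) * v$i" for i
    unfolding sum_distrib_right by (rule sum.cong) (simp_all only: mult_ac)
  then show ?thesis
    unfolding vec_eq_iff outer_def matrix_vector_mult_def dot_def
    by (simp only: vec_lambda_beta vector_smult_component) blast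
qed

lemma sum_outer_mult_vec: "(\<Sum>i\<in>I. outer (v i)) *v z = (\<Sum>i\<in>I. dot (v i) z *s v i)"
  by (induction I rule: infinite_finite_induct)
    (simp_all add: matrix_vector_mult_add_rdistrib outer_mult_vec)

lemma sum_outer_mult_vec_in_span: "(\<Sum>i\<in>I. outer (v i)) *v z \<in> vec.span (v ` I)"
  unfolding sum_outer_mult_vec by (intro vec.span_sum vec.span_scale vec.span_base imageI)

lemma symmetric_rank_one_eq_outer:
  fixes D :: "bit^'n^'n"
  assumes "transpose D = D" "rank D = 1"
  obtains v where "D = outer v"
proof -
  obtain B where B: "B \<subseteq> rows D" "vec.independent B" "rows D \<subseteq> vec.span B"
    "card B = vec.dim (rows D)"
    by (rule vec.basis_exists)
  then obtain u where u: "B = {u}"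
    using assms(2) by (metis card_1_singletonE row_rank_def_gen)
  have "u \<noteq> 0"
    using B(2) u vec.dependent_zero by blast
  have rows_D: "rows D = range (\<lambda>i. D$i)"
    by (auto simp: rows_def row_def vec_eq_iff)
  have "\<forall>i. \<exists>c. D$i = c *s u"
    using B(3) u vec.span_singleton rows_D by blast
  then obtain c where c: "\<And>i. D$i = c i *s u"
    by metis
  have D_entry: "D$i$j = c i * u$j" for i j
    using c by simp
  have c_sym: "c i * u$j = c j * u$i" for i j
  proof -
    have "D$i$j = transpose D $ j $ i"
      by (simp add: transpose_def)
    then show ?thesis
      using assms(1) D_entry by simp
  qed
  obtain i0 where "u = D$i0"
    using B(1) rows_D u by auto
  then have c_i0: "c i0 = 1"
    using c[of i0] \<open>u \<noteq> 0\<close> by (cases "c i0") auto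
  obtain j0 where u_j0: "u$j0 = 1"
    using \<open>u \<noteq> 0\<close> by (metis bit_not_zero_iff vec_eq_iff zero_index)
  have "c j0 = 1"
    using c_sym[of i0 j0] c_i0 u_j0 by (cases "c j0") auto
  then have "c i = u$i" for i
    using c_sym[of i j0] u_j0 by simp
  then have "D = outer u"
    using D_entry by (simp add: outer_def vec_eq_iff)
  then show ?thesis
    by (rule that)
qed

definition quad_form :: "'a::comm_semiring_1^'n^'n \<Rightarrow> 'a^'n \<Rightarrow> 'a" where
  "quad_form M y = dot y (M *v y)"

lemma quad_form_0 [simp]: "quad_form M 0 = 0"
  by (simp add: quad_form_def)

lemma quad_form_add:
  fixes M :: "bit^'n^'n"
  assumes "transpose M = M"
  shows "quad_form M (y + w) = quad_form M y + quad_form M w"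
proof -
  have "quad_form M (y + w) = quad_form M y + quad_form M w + (dot y (M *v w) + dot w (M *v y))"
    unfolding quad_form_def
    by (simp only: matrix_vector_right_distrib dot_add_left dot_add_right add_ac)
  then show ?thesis
    using dot_matrix_vector_symmetric[OF assms, of y w] by simp
qed

lemma quad_form_scale:
  fixes M :: "bit^'n^'n"
  shows "quad_form M (c *s y) = c * quad_form M y"
  by (simp add: quad_form_def vec.scale dot_scale_left dot_scale_right flip: mult.assoc)

lemma quad_form_sum_scale:
  fixes M :: "bit^'n^'n"
  assumes "transpose M = M"
  shows "quad_form M (\<Sum>j\<in>J. c j *s y j) = (\<Sum>j\<in>J. c j * quad_form M (y j))"
  by (induction J rule: infinite_finite_induct)
    (simp_all add: quad_form_add[OF assms] quad_form_scale)

lemma quad_form_sum_outer_mult_vec: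
  fixes M :: "bit^'n^'n"
  assumes "transpose M = M" "\<And>j. j \<in> J \<Longrightarrow> quad_form M (x j) = 1"
  shows "quad_form M ((\<Sum>j\<in>J. outer (x j)) *v z) = quad_form (\<Sum>j\<in>J. outer (x j)) z"
proof -
  have "quad_form M ((\<Sum>j\<in>J. outer (x j)) *v z) = (\<Sum>j\<in>J. dot (x j) z * quad_form M (x j))"
    by (simp only: sum_outer_mult_vec quad_form_sum_scale[OF assms(1)])
  also have "\<dots> = (\<Sum>j\<in>J. dot (x j) z * dot z (x j))"
    using assms(2) by (simp add: dot_commute[of z])
  also have "\<dots> = quad_form (\<Sum>j\<in>J. outer (x j)) z"
    by (simp only: quad_form_def sum_outer_mult_vec dot_sum_right dot_scale_right)
  finally show ?thesis .
qed

lemma independent_in_range_sum_outer: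
  fixes x :: "'i \<Rightarrow> bit^'n"
  assumes "finite J" "inj_on x J" "vec.independent (x ` J)" "j \<in> J"
  obtains z where "(\<Sum>i\<in>J. outer (x i)) *v z = x j" "dot z (x j) = 1"
proof -
  have image_diff: "x ` (J - {j}) = x ` J - {x j}"
    using inj_on_image_set_diff[OF assms(2), of J "{j}"] assms(4) by simp
  have "x j \<notin> vec.span (x ` (J - {j}))"
  proof
    assume "x j \<in> vec.span (x ` (J - {j}))"
    then have "vec.dependent (x ` J)"
      unfolding vec.dependent_def image_diff using assms(4) by blast
    with assms(3) show False
      by contradiction
  qed
  then obtain z where z: "dot z (x j) = 1" "\<And>w. w \<in> vec.span (x ` (J - {j})) \<Longrightarrow> dot z w = 0"
    by (rule exists_dot_separating) blast
  have "dot (x i) z *s x i = (if i = j then x j else 0)" if "i \<in> J" for i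
  proof (cases "i = j")
    case True
    then show ?thesis
      using z(1) by (simp add: dot_commute[of "x j"])
  next
    case False
    then have "x i \<in> vec.span (x ` (J - {j}))"
      using that by (simp add: vec.span_base)
    then show ?thesis
      using z(2)[of "x i"] False by (simp add: dot_commute[of "x i"])
  qed
  then have "(\<Sum>i\<in>J. outer (x i)) *v z = (\<Sum>i\<in>J. if i = j then x j else 0)"
    unfolding sum_outer_mult_vec by (rule sum.cong[OF refl])
  also have "\<dots> = x j"
    using assms(1,4) by simp
  finally show ?thesis
    using z(1) by (rule that)
qed

lemma inj_independent_if_sum_outer_eq:
  fixes v :: "'i \<Rightarrow> bit^'n" and x :: "'j \<Rightarrow> bit^'n"
  assumes "finite I" "finite J" "inj_on x J" "vec.independent (x ` J)"
    and sum_eq: "(\<Sum>i\<in>I. outer (v i)) = (\<Sum>j\<in>J. outer (x j))"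
    and "card I \<le> card J"
  shows "card I = card J" "inj_on v I" "vec.independent (v ` I)"
proof -
  have span: "x ` J \<subseteq> vec.span (v ` I)"
  proof
    fix y assume "y \<in> x ` J"
    then obtain j where "j \<in> J" "y = x j"
      by blast
    then obtain z where "(\<Sum>i\<in>I. outer (v i)) *v z = y"
      using independent_in_range_sum_outer assms(2-4) sum_eq by metis
    then show "y \<in> vec.span (v ` I)"
      using sum_outer_mult_vec_in_span by metis
  qed
  have card_x: "card (x ` J) = card J"
    using assms(3) by (rule card_image)
  have "card J \<le> card (v ` I)"
    using vec.independent_span_bound[OF finite_imageI[OF assms(1)] assms(4) span] card_x by simp
  moreover have "card (v ` I) \<le> card I"
    by (rule card_image_le[OF assms(1)])
  ultimately have card_v: "card (v ` I) = card I" "card I = card J"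
    using assms(6) by simp_all
  then show "card I = card J" "inj_on v I"
    using assms(1) eq_card_imp_inj_on by blast+
  have "card (v ` I) \<le> vec.dim (vec.span (v ` I))"
    using vec.independent_card_le_dim[OF span assms(4)] card_x card_v by simp
  then show "vec.independent (v ` I)"
    using vec.card_le_dim_spanning[OF vec.span_superset order_refl finite_imageI[OF assms(1)]]
    by blast
qed

lemma quad_form_matrix_inv_eq_0_if_invertible_add_outer:
  fixes A :: "bit^'n^'n"
  assumes "invertible A" "invertible (A + outer v)"
  shows "quad_form (matrix_inv A) v = 0"
proof (rule ccontr)
  define w where "w = matrix_inv A *v v"
  assume "quad_form (matrix_inv A) v \<noteq> 0"
  then have "dot v w = 1"
    by (simp add: quad_form_def w_def)
  moreover have "A *v w = v"
    by (simp add: w_def matrix_vector_mul_assoc matrix_mul_matrix_inv[OF assms(1)])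
  ultimately have "(A + outer v) *v w = v + v"
    by (simp add: matrix_vector_mult_add_rdistrib outer_mult_vec)
  also have "\<dots> = (A + outer v) *v 0"
    by (simp add: vec_eq_iff)
  finally have "w = 0"
    using inj_matrix_vector_mult[OF assms(2)] by (metis injD)
  with \<open>dot v w = 1\<close> show False
    by simp
qed

lemma sgl_walk_partial_sums:
  assumes "sgl_walk k A B"
  obtains v where "B = A + (\<Sum>i<k. outer (v i))"
    "\<And>m. m \<le> k \<Longrightarrow> A + (\<Sum>i<m. outer (v i)) \<in> SGL"
proof -
  obtain p where p: "p 0 = A" "p k = B" "\<And>i. i \<le> k \<Longrightarrow> p i \<in> SGL"
    "\<And>i. i < k \<Longrightarrow> sgl_adj (p i) (p (Suc i))"
    using assms unfolding sgl_walk_def by blast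
  have "\<exists>u. p (Suc i) = p i + outer u" if "i < k" for i
  proof -
    have "transpose (p i - p (Suc i)) = p i - p (Suc i)"
      using p(3)[of i] p(3)[of "Suc i"] that by (simp add: SGL_def transpose_def vec_eq_iff)
    moreover have "rank (p i - p (Suc i)) = 1"
      using p(4)[OF that] by (simp add: sgl_adj_def)
    ultimately obtain u where u: "p i - p (Suc i) = outer u"
      by (rule symmetric_rank_one_eq_outer)
    then have "p (Suc i) = p i - outer u"
      unfolding u[symmetric] by simp
    also have "\<dots> = p i + outer u"
      by (simp add: vec_eq_iff)
    finally have "p (Suc i) = p i + outer u" .
    then show ?thesis ..
  qed
  then obtain v where v: "\<And>i. i < k \<Longrightarrow> p (Suc i) = p i + outer (v i)"
    by metis
  have partial_sum: "p m = A + (\<Sum>i<m. outer (v i))" if "m \<le> k" for m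
    using that by (induction m) (simp_all add: p(1) v add.assoc)
  show ?thesis
  proof (rule that)
    show "B = A + (\<Sum>i<k. outer (v i))"
      using partial_sum[of k] p(2) by simp
    show "A + (\<Sum>i<m. outer (v i)) \<in> SGL" if "m \<le> k" for m
      using partial_sum[OF that] p(3)[OF that] by simp
  qed
qed

lemma card_less_if_sum_outer_eq:
  fixes A :: "bit^'n^'n" and x :: "'j \<Rightarrow> bit^'n"
  assumes A: "invertible A" "transpose A = A"
    and x: "finite J" "J \<noteq> {}" "inj_on x J" "vec.independent (x ` J)"
    and q: "\<And>j. j \<in> J \<Longrightarrow> quad_form (matrix_inv A) (x j) = 1"
    and sum_v: "(\<Sum>i<k. outer (v i)) = (\<Sum>j\<in>J. outer (x j))"
    and partial_sums: "\<And>m. m \<le> k \<Longrightarrow> invertible (A + (\<Sum>i<m. outer (v i)))"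
  shows "card J < k"
proof (rule ccontr)
  define C where "C = (\<Sum>j\<in>J. outer (x j))"
  assume "\<not> card J < k"
  then have "card {..<k} = card J" and inj_v: "inj_on v {..<k}"
    and independent_v: "vec.independent (v ` {..<k})"
    using inj_independent_if_sum_outer_eq[OF _ x(1,3,4) sum_v] by simp_all
  then have "0 \<in> {..<k}"
    using x(1,2) by (simp add: card_gt_0_iff)
  then obtain z where "(\<Sum>i<k. outer (v i)) *v z = v 0" and z: "dot z (v 0) = 1"
    by (rule independent_in_range_sum_outer[OF finite_lessThan inj_v independent_v])
  then have Cz: "C *v z = v 0"
    by (simp only: sum_v C_def)
  have "quad_form (matrix_inv A) (C *v z) = quad_form C z"
    unfolding C_def using q by (rule quad_form_sum_outer_mult_vec[OF symmetric_matrix_inv[OF A]])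
  then have "quad_form (matrix_inv A) (v 0) = dot z (v 0)"
    by (simp add: quad_form_def Cz)
  also have "\<dots> = 1"
    by (rule z)
  finally have "quad_form (matrix_inv A) (v 0) = 1" .
  moreover have "invertible (A + outer (v 0))"
    using partial_sums[of 1] \<open>0 \<in> {..<k}\<close> by simp
  then have "quad_form (matrix_inv A) (v 0) = 0"
    by (rule quad_form_matrix_inv_eq_0_if_invertible_add_outer[OF A(1)])
  ultimately show False
    by simp
qed

theorem lemma4p6:
  fixes A :: "bit^'n^'n" and x :: "nat \<Rightarrow> bit^'n" and r :: nat
  assumes "r \<ge> 1"
    and "A \<in> SGL"
    and "A + (\<Sum>i\<in>{1..r}. outer (x i)) \<in> SGL"
    and "inj_on x {1..r}"
    and "vec.independent (x ` {1..r})"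
    and "\<forall>i\<in>{1..r}. (\<Sum>j\<in>UNIV. x i $ j * (matrix_inv A *v x i) $ j) = 1"
  shows "sgl_dist A (A + (\<Sum>i\<in>{1..r}. outer (x i))) \<ge> enat (r + 1)"
proof -
  have A: "invertible A" "transpose A = A"
    using assms(2) by (simp_all add: SGL_def)
  have q: "quad_form (matrix_inv A) (x j) = 1" if "j \<in> {1..r}" for j
    using assms(6) that unfolding quad_form_def dot_def by blast
  have "r < k" if walk: "sgl_walk k A (A + (\<Sum>i\<in>{1..r}. outer (x i)))" for k
  proof -
    obtain v where "A + (\<Sum>i\<in>{1..r}. outer (x i)) = A + (\<Sum>i<k. outer (v i))"
      and partial_sums: "\<And>m. m \<le> k \<Longrightarrow> A + (\<Sum>i<m. outer (v i)) \<in> SGL"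
      using sgl_walk_partial_sums[OF walk] by blast
    then have "(\<Sum>i<k. outer (v i)) = (\<Sum>i\<in>{1..r}. outer (x i))"
      by simp
    moreover have "invertible (A + (\<Sum>i<m. outer (v i)))" if "m \<le> k" for m
      using partial_sums[OF that] by (simp add: SGL_def)
    ultimately show ?thesis
      using card_less_if_sum_outer_eq[OF A _ _ assms(4,5) q] assms(1) by simp
  qed
  then show ?thesis
    unfolding sgl_dist_def by (intro INF_greatest) (simp add: Suc_le_eq)
qed

end
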